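(* Let $s>0$, $Y>0$, $\tau\geq0$, and assume both components of $E_+=(x_+(\tau),y_+(\tau))=\left(\frac sYe^{s\tau},1-\frac sYe^{s\tau}\right)$ are positive. Let $p(\tau)=s\left(1+\frac{e^{s\tau}}{Y}\right)$, $q=-s$, $c(\tau)=s\left(1-\frac{2se^{s\tau}}{Y}\right)$, $\alpha(\tau)=\frac{s^2e^{s\tau}}{Y}$, and consider the characteristic equation \[ \lambda^2+p(\tau)\lambda+(q\lambda+c(\tau))e^{-\lambda\tau}+\alpha(\tau)=0 \tag{C} \] and the equation in $\omega$ \[ \omega^4+(p(\tau)^2-q^2-2\alpha(\tau))\omega^2+\alpha(\tau)^2-c(\tau)^2=0. \tag{Q} \] Let $\tau^*=\frac1s\ln\left(\frac{Y}{3s}\right)$ and \[ \omega_+(\tau)=\sqrt{\tfrac12\left(-x_+(\tau)^2+\sqrt{x_+(\tau)^4+s^2\left(12x_+(\tau)^2-16x_+(\tau)+4\right)}\right)}. \] \begin{enumerate} \item $\omega_+(\tau^* )=0$. If $\tau\geq\tau^*$, then (Q) has no positive real root, and therefore (C) has no purely imaginary roots. In particular, if $\frac sY\geq\frac13$, then $\tau^*\leq0$ and there can be no Hopf bifurcation of $E_+$ for any $\tau\geq0$. \item Assume $\frac sY<\frac13$, so $\tau^*>0$. If $\tau\in[0,\tau^* )$, then $x_+(\tau)\in[\frac sY,\frac13)$ and (Q) has exactly one positive real root, namely $\omega_+(\tau)$. If (C) has purely imaginary roots at $\tau$ (so $\tau$ is a candidate for a Hopf bifurcation of $E_+$), then $\tau\in(0,\tau^*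 )$ and these roots are $\pm i\omega_+(\tau)$ with $\omega_+(\tau)$ given by the formula above. \end{enumerate}
   Context: (C) is the characteristic equation of the linearization at $E_+$ of the delay system $\dot x=x(1-x)-yx$, $\dot y=-sy+Ye^{-s\tau}y(t-\tau)x(t-\tau)$; (Q) is obtained from substituting $\lambda=i\omega$, $\omega>0$, into (C) and eliminating $\tau\omega$. *)

theory Defs
  imports Complex_Main
begin

definition xp :: "real \<Rightarrow> real \<Rightarrow> real \<Rightarrow> real" where
  "xp s Y \<tau> = s / Y * exp (s * \<tau>)"

definition yp :: "real \<Rightarrow> real \<Rightarrow> real \<Rightarrow> real" where
  "yp s Y \<tau> = 1 - s / Y * exp (s * \<tau>)"

definition pp :: "real \<Rightarrow> real \<Rightarrow> real \<Rightarrow> real" where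
  "pp s Y \<tau> = s * (1 + exp (s * \<tau>) / Y)"

definition qq :: "real \<Rightarrow> real" where
  "qq s = - s"

definition cc :: "real \<Rightarrow> real \<Rightarrow> real \<Rightarrow> real" where
  "cc s Y \<tau> = s * (1 - 2 * s * exp (s * \<tau>) / Y)"

definition alpha :: "real \<Rightarrow> real \<Rightarrow> real \<Rightarrow> real" where
  "alpha s Y \<tau> = s\<^sup>2 * exp (s * \<tau>) / Y"

definition charC :: "real \<Rightarrow> real \<Rightarrow> real \<Rightarrow> complex \<Rightarrow> complex" where
  "charC s Y \<tau> z = z\<^sup>2 + of_real (pp s Y \<tau>) * z
      + (of_real (qq s) * z + of_real (cc s Y \<tau>)) * exp (- z * of_real \<tau>)
      + of_real (alpha s Y \<tau>)"

definition eqQ :: "real \<Rightarrow> real \<Rightarrow> real \<Rightarrow> real \<Rightarrow> real" where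
  "eqQ s Y \<tau> \<omega> = \<omega> ^ 4 + ((pp s Y \<tau>)\<^sup>2 - (qq s)\<^sup>2 - 2 * alpha s Y \<tau>) * \<omega>\<^sup>2
      + (alpha s Y \<tau>)\<^sup>2 - (cc s Y \<tau>)\<^sup>2"

definition tau_star :: "real \<Rightarrow> real \<Rightarrow> real" where
  "tau_star s Y = ln (Y / (3 * s)) / s"

definition omega_plus :: "real \<Rightarrow> real \<Rightarrow> real \<Rightarrow> real" where
  "omega_plus s Y \<tau> = sqrt (1/2 * (- (xp s Y \<tau>)\<^sup>2
      + sqrt ((xp s Y \<tau>) ^ 4 + s\<^sup>2 * (12 * (xp s Y \<tau>)\<^sup>2 - 16 * xp s Y \<tau> + 4))))"

end

theory Submission
  imports Defs "HOL-Analysis.Complex_Transcendental"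
begin

text \<open>
  Writing \<open>x = x\<^sub>+(\<tau>)\<close>, the coefficients of (C) are \<open>p = s + x\<close>, \<open>c = s(1 - 2x)\<close>,
  \<open>\<alpha> = s x\<close>, so (Q) is the biquadratic \<open>\<omega>\<^sup>4 + x\<^sup>2\<omega>\<^sup>2 + s\<^sup>2(3x - 1)(1 - x) = 0\<close>.
  Since \<open>x\<close> increases with \<open>\<tau>\<close> and equals \<open>1/3\<close> at \<open>\<tau>\<^sup>*\<close>, its constant term is
  \<open>\<ge> 0\<close> for \<open>\<tau> \<ge> \<tau>\<^sup>*\<close> (no positive root) and \<open>< 0\<close> for \<open>\<tau> < \<tau>\<^sup>*\<close> (exactly one,
  namely \<open>\<omega>\<^sub>+\<close>). Taking moduli in (C) at \<open>\<lambda> = i\<omega>\<close>, where the delay factor has modulus 1,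
  shows that \<open>|\<omega>|\<close> solves (Q); conversely both \<open>\<plusminus>i\<omega>\<close> are roots, as (C) has real
  coefficients. At \<open>\<tau> = 0\<close> the imaginary part of (C) at \<open>i\<omega>\<close> is \<open>x\<omega> \<noteq> 0\<close>.
\<close>

lemma imaginary_root_modulus_eq:
  fixes p q c a t w :: real
  assumes "(\<i> * of_real w)\<^sup>2 + of_real p * (\<i> * of_real w)
      + (of_real q * (\<i> * of_real w) + of_real c) * exp (- (\<i> * of_real w) * of_real t)
      + of_real a = 0"
  shows "w ^ 4 + (p\<^sup>2 - q\<^sup>2 - 2 * a) * w\<^sup>2 + a\<^sup>2 - c\<^sup>2 = 0"
proof -
  define A where "A = Complex (a - w\<^sup>2) (p * w)"
  define B where "B = Complex c (q * w)"
  define E where "E = exp (- (\<i> * of_real w) * of_real t)"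
  have "A + B * E = 0"
    using assms unfolding A_def B_def E_def[symmetric] Complex_eq
    by (simp add: algebra_simps power2_eq_square)
  then have "cmod B * cmod E = cmod A"
    by (metis add_eq_0_iff norm_minus_cancel norm_mult)
  moreover have "- (\<i> * of_real w) * of_real t = \<i> * of_real (- (w * t))"
    by simp
  then have "cmod E = 1"
    unfolding E_def by (simp only: norm_exp_i_times)
  ultimately have "(cmod A)\<^sup>2 = (cmod B)\<^sup>2"
    by simp
  then have "(a - w\<^sup>2)\<^sup>2 + (p * w)\<^sup>2 = c\<^sup>2 + (q * w)\<^sup>2"
    unfolding cmod_power2 A_def B_def by simp
  then show ?thesis
    by (simp add: algebra_simps power2_eq_square power4_eq_xxxx)
qed

lemma biquadratic_unique_positive_root:
  fixes b K w :: real
  assumes "K < 0"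
  shows "w > 0 \<and> w ^ 4 + b * w\<^sup>2 + K = 0 \<longleftrightarrow> w = sqrt (1/2 * (- b + sqrt (b\<^sup>2 - 4 * K)))"
proof -
  define S where "S = sqrt (b\<^sup>2 - 4 * K)"
  define u where "u = 1/2 * (- b + S)"
  define u' where "u' = 1/2 * (- b - S)"
  have S2: "S\<^sup>2 = b\<^sup>2 - 4 * K"
    unfolding S_def using assms by (intro real_sqrt_pow2) (smt (verit) zero_le_power2)
  have "\<bar>b\<bar> < S"
    unfolding S_def using assms by (simp add: real_less_rsqrt)
  then have "u' < 0" "0 < u"
    unfolding u_def u'_def by (auto simp: abs_less_iff)
  have vieta: "u + u' = - b" "u * u' = K"
    unfolding u_def u'_def using S2 by (simp_all add: field_simps power2_eq_square)
  have factor: "v\<^sup>2 + b * v + K = (v - u) * (v - u')" for v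
  proof -
    have "(v - u) * (v - u') = v\<^sup>2 - (u + u') * v + u * u'"
      by (simp add: algebra_simps power2_eq_square)
    with vieta show ?thesis
      by simp
  qed
  show ?thesis
  proof
    assume root: "w > 0 \<and> w ^ 4 + b * w\<^sup>2 + K = 0"
    then have "(w\<^sup>2)\<^sup>2 + b * w\<^sup>2 + K = 0"
      by (simp add: power4_eq_xxxx power2_eq_square)
    then have "(w\<^sup>2 - u) * (w\<^sup>2 - u') = 0"
      by (simp only: factor)
    moreover have "w\<^sup>2 - u' > 0"
      using \<open>u' < 0\<close> by (smt (verit) zero_le_power2)
    ultimately have "w\<^sup>2 = u"
      by simp
    with root show "w = sqrt (1/2 * (- b + sqrt (b\<^sup>2 - 4 * K)))"
      unfolding u_def S_def by (metis less_imp_le real_sqrt_unique)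
  next
    assume "w = sqrt (1/2 * (- b + sqrt (b\<^sup>2 - 4 * K)))"
    then have "w > 0" "w\<^sup>2 = u"
      using \<open>0 < u\<close> unfolding u_def S_def by auto
    then show "w > 0 \<and> w ^ 4 + b * w\<^sup>2 + K = 0"
      using factor[of u] by (simp add: power4_eq_xxxx power2_eq_square mult.assoc)
  qed
qed

lemma coefficients_via_xp:
  "pp s Y t = s + xp s Y t"
  "cc s Y t = s * (1 - 2 * xp s Y t)"
  "alpha s Y t = s * xp s Y t"
  unfolding pp_def cc_def alpha_def xp_def by (simp_all add: algebra_simps power2_eq_square)

lemma eqQ_via_xp:
  "eqQ s Y t w = w ^ 4 + (xp s Y t)\<^sup>2 * w\<^sup>2 + s\<^sup>2 * (3 * xp s Y t - 1) * (1 - xp s Y t)"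
  unfolding eqQ_def coefficients_via_xp qq_def by (simp add: algebra_simps power2_eq_square)

lemma charC_imaginary_root_imp_eqQ:
  assumes "charC s Y t (\<i> * of_real w) = 0"
  shows "eqQ s Y t \<bar>w\<bar> = 0"
  using imaginary_root_modulus_eq[of w "pp s Y t" "qq s" "cc s Y t" t "alpha s Y t"] assms
  unfolding charC_def eqQ_def by (simp add: power_even_abs)

lemma charC_cnj: "charC s Y t (cnj z) = cnj (charC s Y t z)"
  unfolding charC_def by (simp add: exp_cnj)

lemma charC_zero_delay_no_imaginary_root:
  assumes "xp s Y 0 \<noteq> 0" "w \<noteq> 0"
  shows "charC s Y 0 (\<i> * of_real w) \<noteq> 0"
proof -
  have "Im (charC s Y 0 (\<i> * of_real w)) = xp s Y 0 * w"
    unfolding charC_def coefficients_via_xp qq_def by (simp add: power2_eq_square algebra_simps)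
  with assms show ?thesis
    by auto
qed

lemma xp_le_xp_iff:
  assumes "s > 0" "Y > 0"
  shows "xp s Y a \<le> xp s Y b \<longleftrightarrow> a \<le> b"
  unfolding xp_def using assms by (simp add: divide_le_cancel mult_le_cancel_left_pos)

lemma xp_zero: "xp s Y 0 = s / Y"
  unfolding xp_def by simp

lemma xp_tau_star:
  assumes "s > 0" "Y > 0"
  shows "xp s Y (tau_star s Y) = 1/3"
  unfolding xp_def tau_star_def using assms by simp

lemma tau_star_pos_iff:
  assumes "s > 0" "Y > 0"
  shows "tau_star s Y > 0 \<longleftrightarrow> s / Y < 1/3"
  using xp_le_xp_iff[OF assms, of "tau_star s Y" 0] by (simp add: xp_tau_star[OF assms] xp_zero; linarith)

lemma tau_star_le_iff:
  assumes "s > 0" "Y > 0"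
  shows "tau_star s Y \<le> t \<longleftrightarrow> 1/3 \<le> xp s Y t"
  using xp_le_xp_iff[OF assms] xp_tau_star[OF assms] by metis

lemma omega_plus_tau_star:
  assumes "s > 0" "Y > 0"
  shows "omega_plus s Y (tau_star s Y) = 0"
proof -
  have "sqrt (1/81) = (1/9 :: real)"
    by (rule real_sqrt_unique) (simp_all add: power2_eq_square)
  then show ?thesis
    unfolding omega_plus_def xp_tau_star[OF assms] by (simp add: power4_eq_xxxx power2_eq_square)
qed

lemma eqQ_no_positive_root:
  assumes "1/3 \<le> xp s Y t" "xp s Y t < 1" "w > 0"
  shows "eqQ s Y t w \<noteq> 0"
proof -
  have "s\<^sup>2 * (3 * xp s Y t - 1) * (1 - xp s Y t) \<ge> 0"
    using assms by simp
  moreover have "w ^ 4 > 0"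
    using assms by simp
  ultimately show ?thesis
    unfolding eqQ_via_xp by (smt (verit) zero_le_mult_iff zero_le_power2)
qed

lemma charC_no_imaginary_root:
  assumes "1/3 \<le> xp s Y t" "xp s Y t < 1" "w \<noteq> 0"
  shows "charC s Y t (\<i> * of_real w) \<noteq> 0"
  using charC_imaginary_root_imp_eqQ eqQ_no_positive_root assms by fastforce

lemma eqQ_positive_roots:
  assumes "s \<noteq> 0" "0 < xp s Y t" "xp s Y t < 1/3"
  shows "{w. w > 0 \<and> eqQ s Y t w = 0} = {omega_plus s Y t}"
proof -
  let ?x = "xp s Y t"
  have "(3 * ?x - 1) * (1 - ?x) < 0"
    using assms by (intro mult_neg_pos) auto
  then have "s\<^sup>2 * (3 * ?x - 1) * (1 - ?x) < 0"
    using assms(1) by (simp add: mult.assoc mult_pos_neg)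
  moreover have "?x ^ 4 + s\<^sup>2 * (12 * ?x\<^sup>2 - 16 * ?x + 4)
      = (?x\<^sup>2)\<^sup>2 - 4 * (s\<^sup>2 * (3 * ?x - 1) * (1 - ?x))"
    by (simp add: algebra_simps power2_eq_square power4_eq_xxxx)
  ultimately show ?thesis
    unfolding eqQ_via_xp omega_plus_def using biquadratic_unique_positive_root by auto
qed

lemma charC_imaginary_roots:
  assumes "s \<noteq> 0" "0 < xp s Y t" "xp s Y t < 1/3"
    and "w\<^sub>0 \<noteq> 0" "charC s Y t (\<i> * of_real w\<^sub>0) = 0"
  shows "{z. Re z = 0 \<and> z \<noteq> 0 \<and> charC s Y t z = 0}
      = {\<i> * of_real (omega_plus s Y t), - \<i> * of_real (omega_plus s Y t)}"
    (is "_ = {\<i> * of_real ?w, _}")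
proof -
  have abs_root: "\<bar>w\<bar> = ?w" if "w \<noteq> 0" "charC s Y t (\<i> * of_real w) = 0" for w
  proof -
    have "\<bar>w\<bar> \<in> {w. w > 0 \<and> eqQ s Y t w = 0}"
      using charC_imaginary_root_imp_eqQ[OF that(2)] that(1) by simp
    then show ?thesis
      unfolding eqQ_positive_roots[OF assms(1-3)] by simp
  qed
  have root_cnj: "charC s Y t (cnj z) = 0" if "charC s Y t z = 0" for z
    using that by (simp add: charC_cnj)
  have w_pos: "?w > 0"
    using abs_root[OF assms(4,5)] assms(4) by arith
  have "w\<^sub>0 = ?w \<or> w\<^sub>0 = - ?w"
    using abs_root[OF assms(4,5)] by arith
  then have roots: "charC s Y t (\<i> * of_real ?w) = 0" "charC s Y t (- \<i> * of_real ?w) = 0"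
    using assms(5) root_cnj[OF assms(5)] by auto
  show ?thesis
  proof (intro equalityI subsetI)
    fix z
    assume "z \<in> {z. Re z = 0 \<and> z \<noteq> 0 \<and> charC s Y t z = 0}"
    then have z: "Re z = 0" "z \<noteq> 0" "charC s Y t z = 0"
      by auto
    then have "z = \<i> * of_real (Im z)"
      by (simp add: complex_eq_iff)
    then obtain w where w: "z = \<i> * of_real w"
      by blast
    with z have "\<bar>w\<bar> = ?w"
      by (intro abs_root) auto
    then have "w = ?w \<or> w = - ?w"
      by arith
    with w show "z \<in> {\<i> * of_real ?w, - \<i> * of_real ?w}"
      by auto
  next
    fix z
    assume "z \<in> {\<i> * of_real ?w, - \<i> * of_real ?w}"
    with w_pos roots show "z \<in> {z. Re z = 0 \<and> z \<noteq> 0 \<and> charC s Y t z = 0}"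
      by auto
  qed
qed

theorem theorem3p3:
  fixes s Y \<tau> :: real
  assumes "s > 0" and "Y > 0" and "\<tau> \<ge> 0"
    and "xp s Y \<tau> > 0" and "yp s Y \<tau> > 0"
  shows "omega_plus s Y (tau_star s Y) = 0
    \<and> (\<tau> \<ge> tau_star s Y \<longrightarrow>
          (\<forall>\<omega>::real. \<omega> > 0 \<longrightarrow> eqQ s Y \<tau> \<omega> \<noteq> 0)
        \<and> (\<forall>\<omega>::real. \<omega> \<noteq> 0 \<longrightarrow> charC s Y \<tau> (\<i> * of_real \<omega>) \<noteq> 0))
    \<and> (s / Y \<ge> 1/3 \<longrightarrow> tau_star s Y \<le> 0
        \<and> (\<forall>\<omega>::real. \<omega> \<noteq> 0 \<longrightarrow> charC s Y \<tau> (\<i> * of_real \<omega>) \<noteq> 0))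
    \<and> (s / Y < 1/3 \<longrightarrow> tau_star s Y > 0
        \<and> (\<tau> < tau_star s Y \<longrightarrow>
              xp s Y \<tau> \<in> {s / Y..<1/3}
            \<and> {\<omega>::real. \<omega> > 0 \<and> eqQ s Y \<tau> \<omega> = 0} = {omega_plus s Y \<tau>})
        \<and> ((\<exists>\<omega>::real. \<omega> \<noteq> 0 \<and> charC s Y \<tau> (\<i> * of_real \<omega>) = 0) \<longrightarrow>
              \<tau> \<in> {0<..<tau_star s Y}
            \<and> {z. Re z = 0 \<and> z \<noteq> 0 \<and> charC s Y \<tau> z = 0}
                = {\<i> * of_real (omega_plus s Y \<tau>), - \<i> * of_real (omega_plus s Y \<tau>)}))"
proof -
  have "xp s Y \<tau> < 1"
    using assms(5) unfolding xp_def yp_def by simp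
  then have beyond: "(\<forall>\<omega>::real. \<omega> > 0 \<longrightarrow> eqQ s Y \<tau> \<omega> \<noteq> 0)
      \<and> (\<forall>\<omega>::real. \<omega> \<noteq> 0 \<longrightarrow> charC s Y \<tau> (\<i> * of_real \<omega>) \<noteq> 0)"
    if "tau_star s Y \<le> \<tau>"
    using that tau_star_le_iff[OF assms(1,2)] eqQ_no_positive_root charC_no_imaginary_root by blast
  have below: "0 < xp s Y \<tau>" "xp s Y \<tau> < 1/3" if "\<tau> < tau_star s Y"
    using that assms(4) tau_star_le_iff[OF assms(1,2), of \<tau>] by auto
  have root_delay: "\<tau> \<in> {0<..<tau_star s Y}" if "w \<noteq> 0" "charC s Y \<tau> (\<i> * of_real w) = 0" for w
    using that beyond charC_zero_delay_no_imaginary_root[of s Y w] assms(3,4)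
    by (cases "\<tau> = 0") force+
  show ?thesis
  proof (intro conjI impI)
    show "omega_plus s Y (tau_star s Y) = 0"
      using omega_plus_tau_star[OF assms(1,2)] .
    show "tau_star s Y \<le> 0" if "s / Y \<ge> 1/3"
      using that tau_star_pos_iff[OF assms(1,2)] by linarith
    with beyond assms(3) show "\<forall>\<omega>::real. \<omega> \<noteq> 0 \<longrightarrow> charC s Y \<tau> (\<i> * of_real \<omega>) \<noteq> 0"
      if "s / Y \<ge> 1/3"
      using that by auto
    show "tau_star s Y > 0" if "s / Y < 1/3"
      using that tau_star_pos_iff[OF assms(1,2)] by blast
    show "xp s Y \<tau> \<in> {s / Y..<1/3}" if "\<tau> < tau_star s Y"
      using below[OF that] xp_le_xp_iff[OF assms(1,2), of 0 \<tau>] assms(3) by (simp add: xp_zero)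
    show "{\<omega>::real. \<omega> > 0 \<and> eqQ s Y \<tau> \<omega> = 0} = {omega_plus s Y \<tau>}" if "\<tau> < tau_star s Y"
      using eqQ_positive_roots below[OF that] assms(1) by simp
    show "\<forall>\<omega>::real. \<omega> > 0 \<longrightarrow> eqQ s Y \<tau> \<omega> \<noteq> 0"
      and "\<forall>\<omega>::real. \<omega> \<noteq> 0 \<longrightarrow> charC s Y \<tau> (\<i> * of_real \<omega>) \<noteq> 0"
      if "\<tau> \<ge> tau_star s Y"
      using beyond[OF that] by blast+
    assume "\<exists>\<omega>::real. \<omega> \<noteq> 0 \<and> charC s Y \<tau> (\<i> * of_real \<omega>) = 0"
    then obtain w where root: "w \<noteq> 0" "charC s Y \<tau> (\<i> * of_real w) = 0"
      by blast
    then show "\<tau> \<in> {0<..<tau_star s Y}"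
      by (rule root_delay)
    then show "{z. Re z = 0 \<and> z \<noteq> 0 \<and> charC s Y \<tau> z = 0}
        = {\<i> * of_real (omega_plus s Y \<tau>), - \<i> * of_real (omega_plus s Y \<tau>)}"
      using charC_imaginary_roots[OF _ below root] assms(1) by simp
  qed
qed

end
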